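(* Let $\lambda$ be a partition of $n$ with largest part $\lambda_1$. For every integer $m$ with $\ell(\lambda)\le m\le n-(\lambda_1-1)$, the set $\mathrm{QYT}_{=m}(\lambda)$ is nonempty.
   Context: A partition $\lambda=(\lambda_1\ge\lambda_2\ge\cdots\ge\lambda_k>0)$ of $n$ has length $\ell(\lambda)=k$ and size $n=\sum_i\lambda_i$. Its (French) Young diagram has $\lambda_j$ left-justified boxes in row $j$, rows numbered $1,\dots,k$ from bottom to top; a box is $(i,j)$ with $i$ its column and $j$ its row. A semistandard Young tableau (SSYT) of shape $\lambda$ is a filling of the boxes with positive integers that weakly increase from left to right along rows and strictly increase from bottom to top along columns. An SSYT $T$ is quasi-Yamanouchi if for every integer $i>1$ that appears in $T$, the leftmost occurrence of $i$ lies in a column weakly left of (i.e. with column index $\le$ that of) some occurrence of $i-1$ in $T$. $\mathrm{QYT}_{=m}(\lambda)$ denotes the set of quasi-Yamanouchi tableaux of shape $\lambda$ whose largest entry is exactly $m$. *)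

theory Defs
  imports Main
begin

text \<open>A partition is a nonempty weakly decreasing list of positive integers
  (lam ! 0 is the largest part, lam ! (j-1) is the j-th row).\<close>
definition is_partition :: "nat list \<Rightarrow> bool" where
  "is_partition lam \<longleftrightarrow> lam \<noteq> [] \<and> sorted_wrt (\<ge>) lam \<and> (\<forall>x\<in>set lam. 0 < x)"

text \<open>French Young diagram: box (i,j) with column i and row j (1-based).\<close>
definition cells :: "nat list \<Rightarrow> (nat \<times> nat) set" where
  "cells lam = {(i, j). 1 \<le> j \<and> j \<le> length lam \<and> 1 \<le> i \<and> i \<le> lam ! (j - 1)}"

definition is_SSYT :: "nat list \<Rightarrow> (nat \<times> nat \<Rightarrow> nat) \<Rightarrow> bool" where
  "is_SSYT lam T \<longleftrightarrow>
     (\<forall>c. c \<notin> cells lam \<longrightarrow> T c = 0) \<and>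
     (\<forall>c\<in>cells lam. 1 \<le> T c) \<and>
     (\<forall>i i' j. (i, j) \<in> cells lam \<longrightarrow> (i', j) \<in> cells lam \<longrightarrow> i \<le> i' \<longrightarrow> T (i, j) \<le> T (i', j)) \<and>
     (\<forall>i j j'. (i, j) \<in> cells lam \<longrightarrow> (i, j') \<in> cells lam \<longrightarrow> j < j' \<longrightarrow> T (i, j) < T (i, j'))"

definition is_QY :: "nat list \<Rightarrow> (nat \<times> nat \<Rightarrow> nat) \<Rightarrow> bool" where
  "is_QY lam T \<longleftrightarrow>
     (\<forall>k. 1 < k \<longrightarrow> k \<in> T ` cells lam \<longrightarrow>
        (\<exists>c\<in>cells lam. T c = k - 1 \<and> Min {fst d | d. d \<in> cells lam \<and> T d = k} \<le> fst c))"

definition QYT_eq :: "nat \<Rightarrow> nat list \<Rightarrow> (nat \<times> nat \<Rightarrow> nat) set" where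
  "QYT_eq m lam = {T. is_SSYT lam T \<and> is_QY lam T \<and> Max (T ` cells lam) = m}"

end

theory Submission
  imports Defs
begin

text \<open>Let \<open>h i\<close> be the height of column \<open>i\<close> and \<open>o i = (h 1 - 1) + \<dots> + (h (i-1) - 1)\<close>.
  For every \<open>d\<close> the filling \<open>T\<^sub>d (i, j) = j + min d (o i)\<close> is semistandard, and it is
  quasi-Yamanouchi because the bottom entry of every column already occurs in the column to its
  left. Its largest entry is \<open>\<ell>(\<lambda>)\<close> for \<open>d = 0\<close>, grows by at most one from \<open>d\<close> to \<open>d + 1\<close>,
  and for \<open>d = o \<lambda>\<^sub>1\<close> the top cell of the last column carries \<open>h \<lambda>\<^sub>1 + o \<lambda>\<^sub>1 = n - (\<lambda>\<^sub>1 - 1)\<close>;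
  so every value in between is the largest entry of some \<open>T\<^sub>d\<close>.\<close>

lemma nat_intermediate_value_Suc:
  fixes F :: "nat \<Rightarrow> nat"
  assumes "F 0 \<le> m" "m \<le> F N" and step: "\<And>d. F (Suc d) \<le> Suc (F d)"
  shows "\<exists>d. F d = m"
  using assms(2)
proof (induction N)
  case 0
  then show ?case using assms(1) by (intro exI[of _ 0]) simp
next
  case (Suc N)
  show ?case
  proof (cases "m \<le> F N")
    case True
    then show ?thesis using Suc.IH by blast
  next
    case False
    then show ?thesis using Suc.prems step[of N] by (intro exI[of _ "Suc N"]) simp
  qed
qed

definition column_height :: "nat list \<Rightarrow> nat \<Rightarrow> nat" where
  "column_height lam i = length (filter (\<lambda>x. i \<le> x) lam)"

lemma le_nth_iff_less_length_filter:
  fixes xs :: "'a::linorder list"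
  assumes "sorted_wrt (\<ge>) xs" "j < length xs"
  shows "i \<le> xs ! j \<longleftrightarrow> j < length (filter (\<lambda>x. i \<le> x) xs)"
  using assms
proof (induction xs arbitrary: j)
  case Nil
  then show ?case by simp
next
  case (Cons x xs)
  have below_x: "\<forall>y\<in>set xs. y \<le> x" using Cons.prems(1) by simp
  show ?case
  proof (cases "i \<le> x")
    case True
    then show ?thesis using Cons by (cases j) auto
  next
    case False
    have "(x # xs) ! j \<le> x" using below_x Cons.prems(2) by (cases j) auto
    then have "\<not> i \<le> (x # xs) ! j" using False by auto
    moreover have "filter (\<lambda>y. i \<le> y) xs = []" using False below_x by (auto simp: filter_empty_conv)
    ultimately show ?thesis using False by simp
  qed
qed

lemma mem_cells_iff_column_height:
  assumes "is_partition lam"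
  shows "(i, j) \<in> cells lam \<longleftrightarrow> 1 \<le> i \<and> 1 \<le> j \<and> j \<le> column_height lam i"
proof -
  have sorted: "sorted_wrt (\<ge>) lam" using assms by (simp add: is_partition_def)
  have "j \<le> length lam \<and> i \<le> lam ! (j - 1) \<longleftrightarrow> j \<le> column_height lam i" if "1 \<le> j"
  proof (cases "j \<le> length lam")
    case True
    with that have "j - 1 < length lam" by simp
    from le_nth_iff_less_length_filter[OF sorted this, of i] show ?thesis
      using True that by (auto simp: column_height_def)
  next
    case False
    moreover have "column_height lam i \<le> length lam" by (simp add: column_height_def)
    ultimately show ?thesis by simp
  qed
  then show ?thesis unfolding cells_def by auto
qed

lemma finite_cells: "finite (cells lam)"
proof (rule finite_subset)
  show "cells lam \<subseteq> {0..Max (set lam)} \<times> {0..length lam}"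
  proof
    fix c assume "c \<in> cells lam"
    then obtain i j where c: "c = (i, j)" "1 \<le> j" "j \<le> length lam" "i \<le> lam ! (j - 1)"
      by (auto simp: cells_def)
    then have "lam ! (j - 1) \<le> Max (set lam)" by simp
    then show "c \<in> {0..Max (set lam)} \<times> {0..length lam}" using c(1,3) le_trans[OF c(4)] by simp
  qed
qed simp

lemma partition_le_hd:
  assumes "is_partition lam" "x \<in> set lam"
  shows "x \<le> hd lam"
  using assms by (cases lam) (auto simp: is_partition_def)

lemma column_height_pos:
  assumes "is_partition lam" "t \<le> hd lam"
  shows "0 < column_height lam t"
proof -
  have "hd lam \<in> set lam" using assms(1) by (simp add: is_partition_def)
  then show ?thesis using assms(2) by (auto simp: column_height_def filter_empty_conv)
qed

lemma sum_column_height: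
  assumes "\<forall>x\<in>set xs. x \<le> L"
  shows "(\<Sum>t=1..L. column_height xs t) = sum_list xs"
  using assms
proof (induction xs)
  case Nil
  then show ?case by (simp add: column_height_def)
next
  case (Cons x xs)
  have "(\<Sum>t=1..L. column_height (x # xs) t)
      = (\<Sum>t=1..L. (if t \<le> x then 1 else 0) + column_height xs t)"
    by (rule sum.cong) (auto simp: column_height_def)
  also have "\<dots> = card {t\<in>{1..L}. t \<le> x} + sum_list xs"
    using Cons by (simp add: sum.distrib sum.If_cases Int_def)
  also have "{t\<in>{1..L}. t \<le> x} = {1..x}" using Cons.prems by auto
  finally show ?case by simp
qed

definition column_offset :: "nat list \<Rightarrow> nat \<Rightarrow> nat" where
  "column_offset lam i = (\<Sum>t\<in>{1..<i}. column_height lam t - 1)"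

lemma column_offset_mono: "i \<le> i' \<Longrightarrow> column_offset lam i \<le> column_offset lam i'"
  unfolding column_offset_def by (rule sum_mono2) auto

lemma column_offset_Suc:
  "1 \<le> c \<Longrightarrow> column_offset lam (Suc c) = column_offset lam c + (column_height lam c - 1)"
  unfolding column_offset_def by (simp add: atLeastLessThanSuc)

lemma column_offset_hd_plus_column_height:
  assumes "is_partition lam"
  shows "column_offset lam (hd lam) + column_height lam (hd lam) = sum_list lam - (hd lam - 1)"
proof -
  let ?L = "hd lam"
  have L_pos: "1 \<le> ?L"
    using assms by (cases lam) (auto simp: is_partition_def Suc_le_eq)
  have "(\<Sum>t\<in>{1..<?L}. column_height lam t) = (\<Sum>t\<in>{1..<?L}. (column_height lam t - 1) + 1)"
    using column_height_pos[OF assms] by (intro sum.cong) (auto simp: Suc_le_eq)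
  also have "\<dots> = column_offset lam ?L + (?L - 1)"
    by (simp only: sum.distrib column_offset_def) simp
  finally have "(\<Sum>t\<in>{1..<?L}. column_height lam t) = column_offset lam ?L + (?L - 1)" .
  moreover have "sum_list lam = column_height lam ?L + (\<Sum>t\<in>{1..<?L}. column_height lam t)"
    using sum_column_height[of lam ?L] partition_le_hd[OF assms] L_pos
    by (simp add: atLeastLessThanSuc_atLeastAtMost[symmetric] atLeastLessThanSuc)
  ultimately show ?thesis by simp
qed

definition shifted_tableau :: "nat list \<Rightarrow> nat \<Rightarrow> nat \<times> nat \<Rightarrow> nat" where
  "shifted_tableau lam d = (\<lambda>(i, j). if (i, j) \<in> cells lam then j + min d (column_offset lam i) else 0)"

lemma shifted_tableau_cell:
  "(i, j) \<in> cells lam \<Longrightarrow> shifted_tableau lam d (i, j) = j + min d (column_offset lam i)"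
  by (simp add: shifted_tableau_def)

lemma is_SSYT_shifted_tableau: "is_SSYT lam (shifted_tableau lam d)"
  unfolding is_SSYT_def
proof (intro conjI allI ballI impI)
  fix c assume "c \<notin> cells lam"
  then show "shifted_tableau lam d c = 0" by (cases c) (simp add: shifted_tableau_def)
next
  fix c assume "c \<in> cells lam"
  then show "1 \<le> shifted_tableau lam d c" by (cases c) (auto simp: shifted_tableau_def cells_def)
next
  fix i i' j assume "(i, j) \<in> cells lam" "(i', j) \<in> cells lam" "i \<le> i'"
  then show "shifted_tableau lam d (i, j) \<le> shifted_tableau lam d (i', j)"
    using column_offset_mono[of i i' lam] by (simp add: shifted_tableau_cell min.coboundedI2 min_le_iff_disj)
next
  fix i j j' assume "(i, j) \<in> cells lam" "(i, j') \<in> cells lam" "j < j'"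
  then show "shifted_tableau lam d (i, j) < shifted_tableau lam d (i, j')"
    by (simp add: shifted_tableau_cell)
qed

lemma shifted_tableau_bottom_in_previous_column:
  assumes "is_partition lam" "(Suc c, 1) \<in> cells lam" "1 \<le> c"
  shows "\<exists>j. (c, j) \<in> cells lam \<and> shifted_tableau lam d (c, j) = shifted_tableau lam d (Suc c, 1)"
proof -
  let ?a = "min d (column_offset lam c)" and ?h = "column_height lam c"
  have "(c, 1) \<in> cells lam" using assms(2,3) by (auto simp: cells_def)
  then have "1 \<le> ?h" by (simp add: mem_cells_iff_column_height[OF assms(1)])
  moreover have "?a \<le> min d (column_offset lam (Suc c))"
    and "min d (column_offset lam (Suc c)) \<le> ?a + (?h - 1)"
    using column_offset_Suc[OF assms(3), of lam] by auto
  ultimately obtain j where "1 \<le> j" "j \<le> ?h" "j + ?a = 1 + min d (column_offset lam (Suc c))"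
    by (intro that[of "1 + min d (column_offset lam (Suc c)) - ?a"]) auto
  then show ?thesis
    using assms by (intro exI[of _ j]) (simp add: mem_cells_iff_column_height shifted_tableau_cell)
qed

lemma is_QY_shifted_tableau:
  assumes "is_partition lam"
  shows "is_QY lam (shifted_tableau lam d)"
  unfolding is_QY_def
proof (intro allI impI)
  let ?T = "shifted_tableau lam d"
  fix v assume "1 < v" and v_entry: "v \<in> ?T ` cells lam"
  define S where "S = {fst e | e. e \<in> cells lam \<and> ?T e = v}"
  have "S = fst ` {e \<in> cells lam. ?T e = v}" unfolding S_def by blast
  then have "finite S" using finite_cells[of lam] by simp
  moreover have "S \<noteq> {}" using v_entry unfolding S_def by blast
  ultimately have "Min S \<in> S" by simp
  then obtain j where cell: "(Min S, j) \<in> cells lam" and entry: "?T (Min S, j) = v"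
    unfolding S_def by auto
  show "\<exists>e\<in>cells lam. ?T e = v - 1 \<and> Min S \<le> fst e"
  proof (cases "2 \<le> j")
    case True
    then have "(Min S, j - 1) \<in> cells lam"
      using cell by (auto simp: mem_cells_iff_column_height[OF assms])
    moreover from this have "?T (Min S, j - 1) = v - 1"
      using entry cell True by (simp add: shifted_tableau_cell)
    ultimately show ?thesis by auto
  next
    case False
    then have "j = 1" using cell by (simp add: mem_cells_iff_column_height[OF assms])
    moreover have "Min S \<noteq> 1" using entry \<open>1 < v\<close> cell \<open>j = 1\<close> by (auto simp: shifted_tableau_cell column_offset_def)
    moreover have "1 \<le> Min S" using cell by (simp add: mem_cells_iff_column_height[OF assms])
    ultimately have "Min S = Suc (Min S - 1)" "1 \<le> Min S - 1" "(Suc (Min S - 1), 1) \<in> cells lam"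
      using cell by auto
    \<comment> \<open>The bottom entry of column \<open>Min S\<close> also occurs further left, contradicting minimality.\<close>
    then obtain j' where "(Min S - 1, j') \<in> cells lam" "?T (Min S - 1, j') = v"
      using shifted_tableau_bottom_in_previous_column[OF assms] entry \<open>j = 1\<close> by metis
    then have "Min S - 1 \<in> S" unfolding S_def by force
    with \<open>finite S\<close> have "Min S \<le> Min S - 1" by (rule Min_le)
    with \<open>1 \<le> Min S\<close> show ?thesis by simp
  qed
qed

lemma one_one_mem_cells: "is_partition lam \<Longrightarrow> (1, 1) \<in> cells lam"
  by (cases lam) (auto simp: is_partition_def cells_def Suc_le_eq)

lemma Max_shifted_tableau_0_le:
  assumes "is_partition lam"
  shows "Max (shifted_tableau lam 0 ` cells lam) \<le> length lam"
proof (subst Max_le_iff)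
  show "\<forall>x\<in>shifted_tableau lam 0 ` cells lam. x \<le> length lam"
    by (auto simp: shifted_tableau_def cells_def)
qed (use finite_cells one_one_mem_cells[OF assms] in auto)

lemma Max_shifted_tableau_Suc_le:
  assumes "is_partition lam"
  shows "Max (shifted_tableau lam (Suc d) ` cells lam) \<le> Suc (Max (shifted_tableau lam d ` cells lam))"
proof (subst Max_le_iff)
  show "\<forall>x\<in>shifted_tableau lam (Suc d) ` cells lam. x \<le> Suc (Max (shifted_tableau lam d ` cells lam))"
  proof
    fix x assume "x \<in> shifted_tableau lam (Suc d) ` cells lam"
    then obtain c where c: "c \<in> cells lam" "x = shifted_tableau lam (Suc d) c" by blast
    then have "x \<le> Suc (shifted_tableau lam d c)" by (cases c) (auto simp: shifted_tableau_def)
    also have "shifted_tableau lam d c \<le> Max (shifted_tableau lam d ` cells lam)"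
      using c finite_cells by simp
    finally show "x \<le> Suc (Max (shifted_tableau lam d ` cells lam))" by simp
  qed
qed (use finite_cells one_one_mem_cells[OF assms] in auto)

lemma Max_shifted_tableau_column_offset_hd_ge:
  assumes "is_partition lam"
  shows "sum_list lam - (hd lam - 1) \<le> Max (shifted_tableau lam (column_offset lam (hd lam)) ` cells lam)"
proof -
  let ?top = "(hd lam, column_height lam (hd lam))"
  have "?top \<in> cells lam"
    using assms column_height_pos[OF assms]
    by (cases lam) (auto simp: mem_cells_iff_column_height is_partition_def Suc_le_eq)
  then have "shifted_tableau lam (column_offset lam (hd lam)) ?top = sum_list lam - (hd lam - 1)"
    using column_offset_hd_plus_column_height[OF assms] by (simp add: shifted_tableau_cell)
  then show ?thesis using \<open>?top \<in> cells lam\<close> finite_cells by (metis Max_ge finite_imageI image_eqI)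
qed

theorem mainTheorem2:
  fixes lam :: "nat list" and m :: nat
  assumes "is_partition lam"
    and "length lam \<le> m"
    and "m \<le> sum_list lam - (hd lam - 1)"
  shows "QYT_eq m lam \<noteq> {}"
proof -
  define F where "F d = Max (shifted_tableau lam d ` cells lam)" for d
  have "F 0 \<le> m" using Max_shifted_tableau_0_le[OF assms(1)] assms(2) by (simp add: F_def)
  moreover have "m \<le> F (column_offset lam (hd lam))"
    using Max_shifted_tableau_column_offset_hd_ge[OF assms(1)] assms(3) by (simp add: F_def)
  moreover have "F (Suc d) \<le> Suc (F d)" for d
    using Max_shifted_tableau_Suc_le[OF assms(1)] by (simp add: F_def)
  ultimately obtain d where "F d = m" using nat_intermediate_value_Suc[of F m] by blast
  then have "shifted_tableau lam d \<in> QYT_eq m lam"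
    using is_SSYT_shifted_tableau is_QY_shifted_tableau[OF assms(1)] by (simp add: QYT_eq_def F_def)
  then show ?thesis by blast
qed

end
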